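(* Let $H_1,\dots,H_n$, $PV_1,\dots,PV_n$, $I$, $F_1,\dots,F_n$ and $G$ be as follows: the $p$-values have arbitrary joint dependence, $I$ is the set of true nulls, $F_i$ is the null distribution function of $PV_i$ (so $P(PV_j\le x)=F_j(x)$ for $j\in I$) with $F_i(u)\le u$ for all $u\in(0,1)$, and $G(x)=\sum_{i=1}^nF_i(x)$. Let $0=\tilde y_0\le\tilde y_1\le\cdots\le\tilde y_n$ with $\tilde y_n>0$, define $D=\sum_{i=1}^n\frac{1}{i}(\tilde y_i-\tilde y_{i-1})$, and for $\alpha\in(0,1)$ set $y_i=\frac{\alpha}{D}\tilde y_i$. Let $0\le c_1\le\cdots\le c_n\le1$ satisfy $G(c_i)\le y_i$ for $i=1,\dots,n$. Then the step-up procedure with critical values $c$ satisfies $\mathrm{FDR}(c)\le\alpha$. In particular, for $\tilde y_i=i$ one has $D=\sum_{i=1}^n 1/i$, and for $\tilde y_i=i(i+1)$ one has $D=2n$.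
   Context: Step-up procedure with critical values $c_1\le\cdots\le c_n$: let $PV_{(1)}\le\cdots\le PV_{(n)}$ be the ordered $p$-values with corresponding hypotheses $H_{(1)},\dots,H_{(n)}$; let $k=\max\{i: PV_{(i)}\le c_i\}$ and reject $H_{(1)},\dots,H_{(k)}$; if no such $i$ exists, reject nothing. With $R$ the number of rejections and $V$ the number of rejected true null hypotheses, $\mathrm{FDR}(c)=E[V/\max(R,1)]$. *)

theory Defs
  imports "HOL-Probability.Probability"
begin

text \<open>The ordered p-values: sorted_pv n PV w ! (i-1) is PV_(i) (the i-th smallest).\<close>
definition sorted_pv :: "nat \<Rightarrow> (nat \<Rightarrow> 'a \<Rightarrow> real) \<Rightarrow> 'a \<Rightarrow> real list" where
  "sorted_pv n PV w = sort (map (\<lambda>j. PV j w) [1..<n+1])"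

definition ordered_hyps :: "nat \<Rightarrow> (nat \<Rightarrow> 'a \<Rightarrow> real) \<Rightarrow> 'a \<Rightarrow> nat list" where
  "ordered_hyps n PV w = sort_key (\<lambda>j. PV j w) [1..<n+1]"

definition stepup_k :: "nat \<Rightarrow> (nat \<Rightarrow> real) \<Rightarrow> (nat \<Rightarrow> 'a \<Rightarrow> real) \<Rightarrow> 'a \<Rightarrow> nat" where
  "stepup_k n c PV w = Max ({i \<in> {1..n}. sorted_pv n PV w ! (i - 1) \<le> c i} \<union> {0})"

definition stepup_rejected :: "nat \<Rightarrow> (nat \<Rightarrow> real) \<Rightarrow> (nat \<Rightarrow> 'a \<Rightarrow> real) \<Rightarrow> 'a \<Rightarrow> nat set" where
  "stepup_rejected n c PV w = set (take (stepup_k n c PV w) (ordered_hyps n PV w))"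

definition FDR :: "'a measure \<Rightarrow> nat \<Rightarrow> nat set \<Rightarrow> (nat \<Rightarrow> 'a \<Rightarrow> real) \<Rightarrow> (nat \<Rightarrow> real) \<Rightarrow> real" where
  "FDR M n I PV c = (\<integral>w. real (card (stepup_rejected n c PV w \<inter> I))
        / real (max (card (stepup_rejected n c PV w)) 1) \<partial>M)"

end

theory Submission
  imports Defs
begin

(*
  If the step-up procedure rejects k >= 1 hypotheses, every rejected p-value is at most c_k, so
  the false discovery proportion is at most sum_{j in I} 1{PV_j <= c_k} / k.  Writing
  1/k = sum_{i=k..n} w_i with the telescoping weights w_i = 1/i - 1/(i+1) (and w_n = 1/n),
  monotonicity of c bounds this by sum_{j in I} sum_i w_i 1{PV_j <= c_i}, which no longer depends
  on k.  Its expectation is sum_i w_i sum_{j in I} F_j(c_i) <= sum_i w_i y_i, and summation by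
  parts turns sum_i w_i ytilde_i into D.
*)

lemma sum_by_parts:
  fixes f y :: "nat \<Rightarrow> 'a::comm_ring_1"
  assumes "y 0 = 0"
  shows "(\<Sum>i=1..n. (f i - f (Suc i)) * y i)
           = (\<Sum>i=1..n. f i * (y i - y (i - 1))) - f (Suc n) * y n"
proof (induction n)
  case 0
  then show ?case using assms by simp
next
  case (Suc n)
  then show ?case by (simp add: algebra_simps)
qed

definition stepup_weight :: "nat \<Rightarrow> nat \<Rightarrow> real" where
  "stepup_weight n i =
     (if i \<le> n then 1 / real i else 0) - (if Suc i \<le> n then 1 / real (Suc i) else 0)"

lemma stepup_weight_nonneg: "1 \<le> i \<Longrightarrow> 0 \<le> stepup_weight n i"
  by (auto simp: stepup_weight_def frac_le)

lemma sum_stepup_weight_tail: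
  assumes "1 \<le> k" "k \<le> n"
  shows "(\<Sum>i=k..n. stepup_weight n i) = 1 / real k"
proof -
  let ?h = "\<lambda>i. - (if i \<le> n then 1 / real i else 0)"
  have "(\<Sum>i=k..n. stepup_weight n i) = (\<Sum>i=k..n. ?h (Suc i) - ?h i)"
    by (simp add: stepup_weight_def)
  also have "\<dots> = ?h (Suc n) - ?h k"
    using assms by (intro sum_Suc_diff) auto
  finally show ?thesis using assms by simp
qed

lemma sum_stepup_weight_mult:
  assumes "y 0 = 0"
  shows "(\<Sum>i=1..n. stepup_weight n i * y i) = (\<Sum>i=1..n. (1 / real i) * (y i - y (i - 1)))"
  using sum_by_parts[of y "\<lambda>i. if i \<le> n then 1 / real i else 0" n] assms
  by (simp add: stepup_weight_def)

lemma inverse_le_sum_stepup_weight: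
  fixes c :: "nat \<Rightarrow> 'a::preorder"
  assumes "mono_on {1..n} c" "1 \<le> k" "k \<le> n" "x \<le> c k"
  shows "1 / real k \<le> (\<Sum>i=1..n. stepup_weight n i * of_bool (x \<le> c i))"
proof -
  have "1 / real k = (\<Sum>i=k..n. stepup_weight n i * of_bool (x \<le> c i))"
  proof -
    have "x \<le> c i" if "i \<in> {k..n}" for i
      using that assms mono_onD[OF assms(1), of k i] by (auto intro: order_trans)
    then show ?thesis
      using sum_stepup_weight_tail[OF assms(2,3)] by simp
  qed
  also have "\<dots> \<le> (\<Sum>i=1..n. stepup_weight n i * of_bool (x \<le> c i))"
    using assms by (intro sum_mono2) (auto intro: stepup_weight_nonneg)
  finally show ?thesis .
qed

lemma stepup_k_le: "stepup_k n c PV w \<le> n"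
  unfolding stepup_k_def by (intro Max.boundedI) auto

lemma stepup_k_critical:
  assumes "0 < stepup_k n c PV w"
  shows "sorted_pv n PV w ! (stepup_k n c PV w - 1) \<le> c (stepup_k n c PV w)"
proof -
  let ?A = "{i \<in> {1..n}. sorted_pv n PV w ! (i - 1) \<le> c i} \<union> {0}"
  have "Max ?A \<in> ?A" by (intro Max_in) auto
  then show ?thesis using assms unfolding stepup_k_def by auto
qed

lemma sorted_pv_eq_map_ordered_hyps:
  "sorted_pv n PV w = map (\<lambda>j. PV j w) (ordered_hyps n PV w)"
  unfolding sorted_pv_def ordered_hyps_def by (rule properties_for_sort) simp_all

lemma card_stepup_rejected: "card (stepup_rejected n c PV w) = stepup_k n c PV w"
  using stepup_k_le[of n c PV w]
  by (simp add: stepup_rejected_def ordered_hyps_def distinct_card)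

lemma stepup_rejected_le_critical:
  assumes "j \<in> stepup_rejected n c PV w"
  shows "PV j w \<le> c (stepup_k n c PV w)"
proof -
  let ?k = "stepup_k n c PV w" and ?L = "ordered_hyps n PV w"
  have len: "length ?L = n" by (simp add: ordered_hyps_def)
  obtain m where m: "m < ?k" "j = ?L ! m"
    using assms stepup_k_le[of n c PV w] len
    by (auto simp: stepup_rejected_def in_set_conv_nth)
  have "PV j w = sorted_pv n PV w ! m"
    using m len stepup_k_le[of n c PV w] by (simp add: sorted_pv_eq_map_ordered_hyps)
  also have "\<dots> \<le> sorted_pv n PV w ! (?k - 1)"
    using m stepup_k_le[of n c PV w] by (intro sorted_nth_mono) (auto simp: sorted_pv_def)
  also have "\<dots> \<le> c ?k"
    using m by (intro stepup_k_critical) simp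
  finally show ?thesis .
qed

lemma stepup_fdp_le_sum_stepup_weight:
  assumes "mono_on {1..n} c" "finite I"
  shows "real (card (stepup_rejected n c PV w \<inter> I)) / real (max (card (stepup_rejected n c PV w)) 1)
           \<le> (\<Sum>j\<in>I. \<Sum>i=1..n. stepup_weight n i * of_bool (PV j w \<le> c i))"
    (is "_ \<le> (\<Sum>j\<in>I. ?g j)")
proof -
  let ?R = "stepup_rejected n c PV w" and ?k = "stepup_k n c PV w"
  have g_nonneg: "0 \<le> ?g j" for j
    by (intro sum_nonneg) (auto intro: stepup_weight_nonneg)
  show ?thesis
  proof (cases "?k = 0")
    case True
    then have "card (?R \<inter> I) = 0" by (simp add: stepup_rejected_def)
    moreover have "0 \<le> (\<Sum>j\<in>I. ?g j)" by (intro sum_nonneg g_nonneg)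
    ultimately show ?thesis by simp
  next
    case False
    have "real (card (?R \<inter> I)) / real (max (card ?R) 1) = (\<Sum>j\<in>?R \<inter> I. 1 / real ?k)"
      using False by (simp add: card_stepup_rejected)
    also have "\<dots> \<le> (\<Sum>j\<in>?R \<inter> I. ?g j)"
      using False stepup_k_le[of n c PV w]
      by (intro sum_mono inverse_le_sum_stepup_weight[OF assms(1)] stepup_rejected_le_critical) auto
    also have "\<dots> \<le> (\<Sum>j\<in>I. ?g j)"
      using assms(2) by (intro sum_mono2 g_nonneg) auto
    finally show ?thesis .
  qed
qed

lemma (in prob_space)
  fixes X :: "'a \<Rightarrow> real"
  assumes "X \<in> borel_measurable M"
  shows integrable_of_bool_le: "integrable M (\<lambda>w. of_bool (X w \<le> x) :: real)"
    and integral_of_bool_le: "(\<integral>w. of_bool (X w \<le> x) \<partial>M) = prob {w \<in> space M. X w \<le> x}"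
proof -
  have A: "{w \<in> space M. X w \<le> x} \<in> events"
    using assms by (intro borel_measurable_le) auto
  have eq: "(of_bool (X w \<le> x) :: real) = indicator {w \<in> space M. X w \<le> x} w"
    if "w \<in> space M" for w
    using that by (simp add: indicator_def)
  show "integrable M (\<lambda>w. of_bool (X w \<le> x) :: real)"
    using A by (subst Bochner_Integration.integrable_cong[OF refl eq])
      (auto intro: integrable_real_indicator simp: emeasure_eq_measure)
  show "(\<integral>w. of_bool (X w \<le> x) \<partial>M) = prob {w \<in> space M. X w \<le> x}"
    using A by (subst Bochner_Integration.integral_cong[OF refl eq]) auto
qed

text \<open>
  Measurability of the false discovery proportion is not assumed: if it is not integrable,
  the Bochner integral in FDR is 0 by convention and the bound holds trivially.
\<close>
lemma (in prob_space) FDR_le_sum_stepup_weight: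
  assumes "\<And>j. j \<in> I \<Longrightarrow> PV j \<in> borel_measurable M" "finite I" "mono_on {1..n} c"
  shows "FDR M n I PV c \<le> (\<Sum>j\<in>I. \<Sum>i=1..n. stepup_weight n i * prob {w \<in> space M. PV j w \<le> c i})"
proof -
  let ?fdp = "\<lambda>w. real (card (stepup_rejected n c PV w \<inter> I))
                    / real (max (card (stepup_rejected n c PV w)) 1)"
  let ?g = "\<lambda>w. \<Sum>j\<in>I. \<Sum>i=1..n. stepup_weight n i * of_bool (PV j w \<le> c i)"
  have int_terms: "integrable M (\<lambda>w. stepup_weight n i * of_bool (PV j w \<le> c i))"
    if "j \<in> I" for i j
    using assms(1)[OF that] by (intro integrable_mult_right integrable_of_bool_le)
  then have int_g: "integrable M ?g"
    by (intro Bochner_Integration.integrable_sum) auto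
  have "integral\<^sup>L M ?g
      = (\<Sum>j\<in>I. \<integral>w. (\<Sum>i=1..n. stepup_weight n i * of_bool (PV j w \<le> c i)) \<partial>M)"
    using int_terms
    by (intro Bochner_Integration.integral_sum Bochner_Integration.integrable_sum) auto
  also have "\<dots> = (\<Sum>j\<in>I. \<Sum>i=1..n. \<integral>w. stepup_weight n i * of_bool (PV j w \<le> c i) \<partial>M)"
    using int_terms by (intro sum.cong refl Bochner_Integration.integral_sum) auto
  also have "\<dots> = (\<Sum>j\<in>I. \<Sum>i=1..n. stepup_weight n i * prob {w \<in> space M. PV j w \<le> c i})"
    using assms(1)
    by (intro sum.cong refl) (simp only: integral_mult_right_zero integral_of_bool_le)
  finally have "integral\<^sup>L M ?g = \<dots>" .
  moreover have "FDR M n I PV c \<le> integral\<^sup>L M ?g"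
  proof (cases "integrable M ?fdp")
    case True
    then show ?thesis unfolding FDR_def
      using int_g stepup_fdp_le_sum_stepup_weight[OF assms(3,2)] by (intro integral_mono) auto
  next
    case False
    then have "FDR M n I PV c = 0" by (simp add: FDR_def not_integrable_integral_eq)
    also have "0 \<le> integral\<^sup>L M ?g"
      by (intro Bochner_Integration.integral_nonneg sum_nonneg mult_nonneg_nonneg stepup_weight_nonneg)
        auto
    finally show ?thesis .
  qed
  ultimately show ?thesis by simp
qed

lemma sum_increments_div_index_pos:
  fixes y :: "nat \<Rightarrow> real"
  assumes "y 0 = 0" "\<And>i. i < n \<Longrightarrow> y i \<le> y (Suc i)" "0 < y n"
  shows "0 < (\<Sum>l=1..n. (1 / real l) * (y l - y (l - 1)))"
proof -
  have n: "1 \<le> n" using assms(1,3) by (cases n) auto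
  have y_nonneg: "0 \<le> y i" if "i \<le> n" for i
  proof -
    have "y 0 \<le> y i"
      by (rule lift_Suc_mono_le_ivl[of "{..<n}"]) (use assms(2) that in auto)
    then show ?thesis using assms(1) by simp
  qed
  have "0 < stepup_weight n n * y n"
    using n assms(3) by (simp add: stepup_weight_def)
  also have "\<dots> \<le> (\<Sum>i=1..n. stepup_weight n i * y i)"
    using n y_nonneg by (intro member_le_sum mult_nonneg_nonneg stepup_weight_nonneg) auto
  also have "\<dots> = (\<Sum>l=1..n. (1 / real l) * (y l - y (l - 1)))"
    using assms(1) by (rule sum_stepup_weight_mult)
  finally show ?thesis .
qed

lemma sum_stepup_weight_cdfs_le:
  fixes F :: "nat \<Rightarrow> real \<Rightarrow> real" and y :: "nat \<Rightarrow> real" and n :: nat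
  defines "D \<equiv> (\<Sum>l=1..n. (1 / real l) * (y l - y (l - 1)))"
  assumes "I \<subseteq> {1..n}" "\<And>l x. l \<in> {1..n} \<Longrightarrow> 0 \<le> F l x" "y 0 = 0" "0 < D"
    and "\<And>i. i \<in> {1..n} \<Longrightarrow> (\<Sum>l=1..n. F l (c i)) \<le> \<alpha> / D * y i"
  shows "(\<Sum>j\<in>I. \<Sum>i=1..n. stepup_weight n i * F j (c i)) \<le> \<alpha>"
proof -
  have "(\<Sum>j\<in>I. \<Sum>i=1..n. stepup_weight n i * F j (c i))
      = (\<Sum>i=1..n. stepup_weight n i * (\<Sum>j\<in>I. F j (c i)))"
    by (subst sum.swap) (simp add: sum_distrib_left)
  also have "\<dots> \<le> (\<Sum>i=1..n. stepup_weight n i * (\<Sum>l=1..n. F l (c i)))"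
    using assms(2,3)
    by (intro sum_mono mult_left_mono sum_mono2 stepup_weight_nonneg) auto
  also have "\<dots> \<le> (\<Sum>i=1..n. stepup_weight n i * (\<alpha> / D * y i))"
    using assms(6) by (intro sum_mono mult_left_mono stepup_weight_nonneg) auto
  also have "\<dots> = \<alpha> / D * (\<Sum>i=1..n. stepup_weight n i * y i)"
    by (simp add: sum_distrib_left algebra_simps)
  also have "\<dots> = \<alpha>"
    using sum_stepup_weight_mult[of y n, OF assms(4)] assms(5) by (simp only: D_def) simp
  finally show ?thesis .
qed

theorem corollary1:
  fixes M :: "'a measure" and n :: nat and I :: "nat set"
    and PV :: "nat \<Rightarrow> 'a \<Rightarrow> real" and F :: "nat \<Rightarrow> real \<Rightarrow> real"
    and yt :: "nat \<Rightarrow> real" and c :: "nat \<Rightarrow> real" and \<alpha> :: real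
  assumes "prob_space M"
    and PV_meas: "\<And>j. j \<in> {1..n} \<Longrightarrow> PV j \<in> borel_measurable M"
    and I_sub: "I \<subseteq> {1..n}"
    and F_cdf: "\<And>i. i \<in> {1..n} \<Longrightarrow> mono (F i) \<and> (\<forall>x. 0 \<le> F i x \<and> F i x \<le> 1)"
    and F_null: "\<And>j x. j \<in> I \<Longrightarrow> measure M {w \<in> space M. PV j w \<le> x} = F j x"
    and F_le: "\<And>i u. i \<in> {1..n} \<Longrightarrow> 0 < u \<Longrightarrow> u < 1 \<Longrightarrow> F i u \<le> u"
    and yt0: "yt 0 = 0"
    and yt_mono: "\<And>i. i < n \<Longrightarrow> yt i \<le> yt (Suc i)"
    and ytn: "yt n > 0"
    and alpha: "0 < \<alpha>" "\<alpha> < 1"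
    and c_nonneg: "0 \<le> c 1"
    and c_mono: "\<And>i. 1 \<le> i \<Longrightarrow> i < n \<Longrightarrow> c i \<le> c (Suc i)"
    and c_le1: "c n \<le> 1"
    and c_G: "\<And>i. i \<in> {1..n} \<Longrightarrow>
        (\<Sum>l=1..n. F l (c i)) \<le> \<alpha> / (\<Sum>l=1..n. (1 / real l) * (yt l - yt (l - 1))) * yt i"
  shows "FDR M n I PV c \<le> \<alpha>
     \<and> (\<Sum>l=1..n. (1 / real l) * (real l - real (l - 1))) = (\<Sum>l=1..n. 1 / real l)
     \<and> (\<Sum>l=1..n. (1 / real l) * (real l * (real l + 1) - real (l - 1) * (real (l - 1) + 1)))
         = 2 * real n"
proof (intro conjI)
  have c_mono_on: "mono_on {1..n} c"
  proof (rule mono_onI)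
    fix r s assume "r \<in> {1..n}" "s \<in> {1..n}" "r \<le> s"
    then show "c r \<le> c s"
      by (intro lift_Suc_mono_le_ivl[of "{1..<n}" c r s]) (use c_mono in auto)
  qed
  interpret prob_space M by fact
  have PV_meas_I: "PV j \<in> borel_measurable M" if "j \<in> I" for j
    using that I_sub PV_meas by blast
  have F_nonneg: "0 \<le> F l x" if "l \<in> {1..n}" for l x
    using F_cdf[OF that] by blast
  have "FDR M n I PV c \<le> (\<Sum>j\<in>I. \<Sum>i=1..n. stepup_weight n i * prob {w \<in> space M. PV j w \<le> c i})"
    by (rule FDR_le_sum_stepup_weight[OF PV_meas_I finite_subset[OF I_sub] c_mono_on]) simp_all
  also have "\<dots> = (\<Sum>j\<in>I. \<Sum>i=1..n. stepup_weight n i * F j (c i))"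
    using F_null by (intro sum.cong refl) simp
  also have "\<dots> \<le> \<alpha>"
    by (rule sum_stepup_weight_cdfs_le[OF I_sub F_nonneg yt0
          sum_increments_div_index_pos[OF yt0 yt_mono ytn] c_G])
  finally show "FDR M n I PV c \<le> \<alpha>" .
  show "(\<Sum>l=1..n. (1 / real l) * (real l - real (l - 1))) = (\<Sum>l=1..n. 1 / real l)"
    by (rule sum.cong) (auto simp: of_nat_diff)
  have "(\<Sum>l=1..n. (1 / real l) * (real l * (real l + 1) - real (l - 1) * (real (l - 1) + 1)))
      = (\<Sum>l=1..n. 2)"
    by (rule sum.cong) (auto simp: of_nat_diff field_simps)
  then show "(\<Sum>l=1..n. (1 / real l) * (real l * (real l + 1) - real (l - 1) * (real (l - 1) + 1)))
      = 2 * real n" by simp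
qed

end
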